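(* Let $M:[0,\infty)\to\mathbb{R}$ be continuous and satisfy condition (M3) for some $\gamma>0$ (see context), and let $T\ge 0$. Define functions on $[T,\infty)$ by $q_1(t):=M(t)$, $Q_k(t):=-\int_t^\infty q_k(s)\,ds$ for $k\ge1$, and $q_k(t):=\sum_{j=1}^{k-1}Q_j(t)Q_{k-j}(t)$ for $k\ge 2$, and set $\phi(t):=-\int_t^\infty Q_2(s)\,ds$. Then $Q_2(t)\le 0$ for $t\ge T$, and for every integer $k\ge 2$ and every $t\ge T$, $$|Q_k(t)|\le 4^{k-1}\big(-Q_2(t)\big)\,\phi(t)^{\frac{k-2}{2}}.$$
   Context: Condition (M3) (with $\gamma>0$): $\big|\int_t^\infty M(s)\,ds\big|\lesssim(1+t)^{-\gamma}$, $\int_t^\infty\big(\int_s^\infty M(\sigma)\,d\sigma\big)^2ds\lesssim(1+t)^{-\gamma}$ for $t\ge 0$, and $\int_0^\infty\int_t^\infty\big(\int_s^\infty M(\sigma)\,d\sigma\big)^2\,ds\,dt<\infty$; here $f\lesssim g$ means $f\le Cg$ with $C$ independent of $t$. *)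

theory Defs
  imports "HOL-Analysis.Analysis"
begin

text \<open>Tail integral \<open>\<integral>_t^\<infinity> f\<close>, as a Henstock--Kurzweil integral over \<open>{t..}\<close>
  (on an unbounded interval this is the improper integral \<open>lim_{b\<rightarrow>\<infinity>} \<integral>_t^b f\<close>).\<close>
definition tailint :: "(real \<Rightarrow> real) \<Rightarrow> real \<Rightarrow> real" where
  "tailint f t = integral {t..} f"

text \<open>Condition (M3) with exponent \<open>\<gamma>\<close>; the existence of the improper integrals
  occurring in it is part of the condition.\<close>
definition M3 :: "(real \<Rightarrow> real) \<Rightarrow> real \<Rightarrow> bool" where
  "M3 M \<gamma> \<longleftrightarrow>
     (\<forall>t\<ge>0. M integrable_on {t..}) \<and>
     (\<forall>t\<ge>0. (\<lambda>s. (tailint M s)\<^sup>2) integrable_on {t..}) \<and>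
     (\<lambda>t. tailint (\<lambda>s. (tailint M s)\<^sup>2) t) integrable_on {0..} \<and>
     (\<exists>C. \<forall>t\<ge>0. \<bar>tailint M t\<bar> \<le> C * (1 + t) powr (- \<gamma>)) \<and>
     (\<exists>C. \<forall>t\<ge>0. tailint (\<lambda>s. (tailint M s)\<^sup>2) t \<le> C * (1 + t) powr (- \<gamma>))"

function Qk :: "(real \<Rightarrow> real) \<Rightarrow> nat \<Rightarrow> real \<Rightarrow> real" where
  "Qk M 0 t = 0"
| "Qk M (Suc 0) t = - tailint M t"
| "Qk M (Suc (Suc n)) t =
     - tailint (\<lambda>s. \<Sum>j=1..Suc n. Qk M j s * Qk M (Suc (Suc n) - j) s) t"
  by pat_completeness auto
termination
  by (relation "Wellfounded.measure (\<lambda>(M, k, t). k)") auto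

definition qk :: "(real \<Rightarrow> real) \<Rightarrow> nat \<Rightarrow> real \<Rightarrow> real" where
  "qk M k t = (if k = 1 then M t else (\<Sum>j=1..k-1. Qk M j t * Qk M (k - j) t))"

definition phi :: "(real \<Rightarrow> real) \<Rightarrow> real \<Rightarrow> real" where
  "phi M t = - tailint (Qk M 2) t"

lemma Qk_qk: "Qk M k t = - tailint (qk M k) t" if "k \<ge> 1"
proof (cases k)
  case (Suc n)
  then show ?thesis
  proof (cases n)
    case 0 with Suc show ?thesis by (simp add: qk_def[abs_def])
  next
    case (Suc m)
    with \<open>k = Suc n\<close> show ?thesis unfolding qk_def[abs_def] by simp
  qed
qed (use that in simp)

end

theory Submission
  imports Defs
begin

text \<open>Write \<open>F = tailint M\<close>, \<open>\<psi> = -Q\<^sub>2 = tailint F\<^sup>2\<close> and \<open>\<phi> = tailint \<psi>\<close>; then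
  \<open>\<psi>\<close> and \<open>\<phi>\<close> are nonnegative and decreasing, and \<open>\<phi>' = -\<psi>\<close>. The bound
  \<open>|Q\<^sub>k(t)| \<le> 4^(k-1) \<psi>(t) sqrt(\<phi>(t))^(k-2)\<close> is proved by strong induction on \<open>k\<close>,
  together with continuity of \<open>Q\<^sub>k\<close> and integrability of \<open>q\<^sub>k\<close>. Let \<open>k \<ge> 3\<close> and \<open>s \<ge> t\<close>.
  The two outer terms \<open>Q\<^sub>1 Q\<^sub>k\<^sub>-\<^sub>1\<close> of \<open>q\<^sub>k(s)\<close> are bounded by
  \<open>4^(k-2) sqrt(\<phi>(t))^(k-3) |F(s)| \<psi>(s)\<close>, and \<open>tailint (|F| \<psi>) t \<le> \<psi>(t) sqrt(\<phi>(t))\<close> by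
  Cauchy--Schwarz. Each of the \<open>k - 3\<close> inner terms is bounded by
  \<open>4^(k-2) \<psi>(t) \<psi>(s) sqrt(\<phi>(s))^(k-4)\<close>, and \<open>\<phi>' = -\<psi>\<close> gives
  \<open>tailint (\<psi> sqrt(\<phi>)^m) t \<le> 2 sqrt(\<phi>(t))^(m+2) / (m+1)\<close>. Each of the two contributions is
  thus at most \<open>2 \<cdot> 4^(k-2) \<psi>(t) sqrt(\<phi>(t))^(k-2)\<close>.\<close>

lemma absolutely_integrable_on_tail_if_nonneg:
  fixes f :: "real \<Rightarrow> real"
  assumes "f integrable_on {a..}" "\<And>x. a \<le> x \<Longrightarrow> 0 \<le> f x" "a \<le> b"
  shows "f absolutely_integrable_on {b..}"
proof -
  have "f absolutely_integrable_on {a..}"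
    using assms by (intro nonnegative_absolutely_integrable_1) auto
  then show ?thesis
    by (rule set_integrable_subset) (use assms in auto)
qed

lemma integrable_on_tail_if_nonneg:
  fixes f :: "real \<Rightarrow> real"
  assumes "f integrable_on {a..}" "\<And>x. a \<le> x \<Longrightarrow> 0 \<le> f x" "a \<le> b"
  shows "f integrable_on {b..}"
  using absolutely_integrable_on_tail_if_nonneg[OF assms] set_lebesgue_integral_eq_integral(1)
  by blast

lemma tendsto_integral_atLeastAtMost_at_top:
  fixes f :: "real \<Rightarrow> real"
  assumes "f absolutely_integrable_on {a..}"
  shows "((\<lambda>b. integral {a..b} f) \<longlongrightarrow> integral {a..} f) at_top"
proof -
  have "((\<lambda>b. LINT x:{a..b}|lebesgue. f x) \<longlongrightarrow> (LINT x:{a..}|lebesgue. f x)) at_top"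
    by (rule tendsto_set_lebesgue_integral_at_top[OF _ assms]) simp
  moreover have "(LINT x:{a..b}|lebesgue. f x) = integral {a..b} f" for b
    by (rule set_lebesgue_integral_eq_integral(2), rule set_integrable_subset[OF assms]) auto
  ultimately show ?thesis
    using set_lebesgue_integral_eq_integral(2)[OF assms] by simp
qed

lemma tailint_eq_integral_diff:
  fixes f :: "real \<Rightarrow> real"
  assumes "f integrable_on {a..x}" "f integrable_on {x..}" "a \<le> x"
  shows "tailint f x = integral {a..} f - integral {a..x} f"
proof -
  have "(f has_integral (integral {a..x} f + integral {x..} f)) ({a..x} \<union> {x..})"
    using assms by (intro has_integral_Un integrable_integral)
      (auto intro: negligible_subset[of "{x}"])
  moreover have "{a..x} \<union> {x..} = {a..}" using assms(3) by auto
  ultimately show ?thesis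
    unfolding tailint_def by (simp add: integral_unique)
qed

lemma tailint_tendsto_0:
  fixes f :: "real \<Rightarrow> real"
  assumes "f absolutely_integrable_on {a..}"
  shows "(tailint f \<longlongrightarrow> 0) at_top"
proof -
  have integrable: "f integrable_on S" if "S \<subseteq> {a..}" "S \<in> sets lebesgue" for S
    by (rule set_lebesgue_integral_eq_integral(1)[OF set_integrable_subset[OF assms that(2,1)]])
  have "integral {a..} f - integral {a..x} f = tailint f x" if "a \<le> x" for x
  proof (rule tailint_eq_integral_diff[symmetric, OF _ _ that])
    show "f integrable_on {a..x}" by (rule integrable) simp_all
    show "f integrable_on {x..}" by (rule integrable) (use that in simp_all)
  qed
  then have "eventually (\<lambda>x. integral {a..} f - integral {a..x} f = tailint f x) at_top"
    using eventually_ge_at_top[of a] by (rule eventually_mono[rotated]) blast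
  moreover have "((\<lambda>x. integral {a..} f - integral {a..x} f) \<longlongrightarrow> 0) at_top"
    using tendsto_diff[OF tendsto_const[of "integral {a..} f"]
        tendsto_integral_atLeastAtMost_at_top[OF assms]] by simp
  ultimately show ?thesis by (rule Lim_transform_eventually[rotated])
qed

lemma has_real_derivative_tailint:
  fixes f :: "real \<Rightarrow> real"
  assumes cont: "continuous_on {a..} f" and integrable: "\<And>x. a \<le> x \<Longrightarrow> f integrable_on {x..}"
    and "a \<le> y"
  shows "(tailint f has_real_derivative - f y) (at y within {a..})"
proof -
  have "((\<lambda>u. integral {a..u} f) has_real_derivative f y) (at y within {a..y+1})"
    unfolding has_real_derivative_iff_has_vector_derivative
    using \<open>a \<le> y\<close> by (intro integral_has_vector_derivative continuous_on_subset[OF cont]) auto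
  moreover have "at y within {a..} = at y within {a..y+1}"
    by (rule at_within_nhd[where S="{..<y+1}"]) auto
  ultimately have "((\<lambda>u. integral {a..u} f) has_real_derivative f y) (at y within {a..})"
    by simp
  from DERIV_diff[OF DERIV_const this]
  have deriv: "((\<lambda>u. integral {a..} f - integral {a..u} f) has_real_derivative - f y)
      (at y within {a..})"
    by simp
  have eq: "integral {a..} f - integral {a..u} f = tailint f u" if "u \<in> {a..}" for u
  proof (rule tailint_eq_integral_diff[symmetric])
    show "f integrable_on {a..u}"
      by (rule integrable_continuous_interval, rule continuous_on_subset[OF cont]) auto
  qed (use that integrable in simp_all)
  show ?thesis
    by (rule has_field_derivative_transform_within[OF deriv zero_less_one])
      (use \<open>a \<le> y\<close> eq in simp_all)
qed

lemma continuous_on_tailint: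
  fixes f :: "real \<Rightarrow> real"
  assumes "continuous_on {a..} f" "\<And>x. a \<le> x \<Longrightarrow> f integrable_on {x..}"
  shows "continuous_on {a..} (tailint f)"
  unfolding continuous_on_eq_continuous_within
  by (metis DERIV_continuous atLeast_iff has_real_derivative_tailint[OF assms])

lemma tailint_nonneg:
  fixes f :: "real \<Rightarrow> real"
  assumes "f integrable_on {t..}" "\<And>x. t \<le> x \<Longrightarrow> 0 \<le> f x"
  shows "0 \<le> tailint f t"
  unfolding tailint_def using assms by (intro integral_nonneg) auto

lemma tailint_antimono:
  fixes f :: "real \<Rightarrow> real"
  assumes "f integrable_on {t..}" "\<And>x. t \<le> x \<Longrightarrow> 0 \<le> f x" "t \<le> s"
  shows "tailint f s \<le> tailint f t"
proof -
  have "f integrable_on {s..}"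
    by (rule integrable_on_tail_if_nonneg[OF assms])
  then show ?thesis
    unfolding tailint_def using assms by (intro integral_subset_le) auto
qed

lemma integrable_on_atLeast_if_dominated:
  fixes h H :: "real \<Rightarrow> real"
  assumes "continuous_on {t..} h" "H integrable_on {t..}" "\<And>x. t \<le> x \<Longrightarrow> \<bar>h x\<bar> \<le> H x"
  shows "h integrable_on {t..}"
proof (rule measurable_bounded_by_integrable_imp_integrable_real)
  show "h \<in> borel_measurable (lebesgue_on {t..})"
    by (rule continuous_imp_measurable_on_sets_lebesgue) (use assms in auto)
qed (use assms in auto)

lemma le_mult_sqrt_if_le_AM_GM:
  fixes x c \<phi> :: real
  assumes "0 \<le> c" "0 \<le> \<phi>" and AM_GM: "\<And>l. 0 < l \<Longrightarrow> x \<le> c * (l + \<phi> / l) / 2"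
  shows "x \<le> c * sqrt \<phi>"
proof (cases "\<phi> = 0")
  case True
  show ?thesis
  proof (rule ccontr)
    assume "\<not> ?thesis"
    with True have "0 < x" by simp
    with AM_GM[of 1] True have "0 < c" by auto
    with AM_GM[of "x / c"] True \<open>0 < x\<close> show False by simp
  qed
next
  case False
  with assms(2) have "0 < sqrt \<phi>" by simp
  with AM_GM[of "sqrt \<phi>"] show ?thesis
    using assms(2) by (simp add: real_div_sqrt)
qed

context
  fixes g :: "real \<Rightarrow> real" and a :: real
  assumes g_cont: "continuous_on {a..} g"
    and g_nonneg: "\<And>x. a \<le> x \<Longrightarrow> 0 \<le> g x"
    and g_integrable: "g integrable_on {a..}"
begin

private lemma g_integrable_on_tail: "a \<le> t \<Longrightarrow> g integrable_on {t..}"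
  by (rule integrable_on_tail_if_nonneg[OF g_integrable g_nonneg])

private lemma tailint_g_nonneg: "a \<le> t \<Longrightarrow> 0 \<le> tailint g t"
  using g_nonneg by (intro tailint_nonneg g_integrable_on_tail) auto

private lemma tailint_g_antimono: "a \<le> t \<Longrightarrow> t \<le> s \<Longrightarrow> tailint g s \<le> tailint g t"
  using g_nonneg by (intro tailint_antimono g_integrable_on_tail) auto

private lemma continuous_on_tailint_g: "continuous_on {a..} (tailint g)"
  using g_cont g_integrable_on_tail by (rule continuous_on_tailint)

lemma has_integral_mult_tailint_power:
  assumes "a \<le> t"
  shows "((\<lambda>s. g s * tailint g s ^ n) has_integral tailint g t ^ Suc n / Suc n) {t..}"
proof (rule has_integral_to_inf)
  let ?\<phi> = "tailint g"
  show "(\<lambda>s. g s * ?\<phi> s ^ n) integrable_on {t..y}" for y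
    using assms by (intro integrable_continuous_interval continuous_intros
        continuous_on_subset[OF g_cont] continuous_on_subset[OF continuous_on_tailint_g]) auto
  have "integral {t..y} (\<lambda>s. g s * ?\<phi> s ^ n) = (?\<phi> t ^ Suc n - ?\<phi> y ^ Suc n) / Suc n"
    if "t \<le> y" for y
  proof -
    have "((\<lambda>x. - (?\<phi> x ^ Suc n / Suc n)) has_real_derivative g x * ?\<phi> x ^ n)
        (at x within {t..y})"
      if "x \<in> {t..y}" for x
    proof -
      have "(?\<phi> has_real_derivative - g x) (at x within {a..})"
        using g_cont g_integrable_on_tail
        by (rule has_real_derivative_tailint) (use assms that in auto)
      then have \<phi>_deriv: "(?\<phi> has_real_derivative - g x) (at x within {t..y})"
        by (rule DERIV_subset) (use assms in auto)
      have "((\<lambda>x. ?\<phi> x ^ Suc n) has_real_derivative Suc n * (- g x * ?\<phi> x ^ n))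
          (at x within {t..y})"
        using DERIV_power[where n="Suc n", OF \<phi>_deriv] by simp
      then have "((\<lambda>x. - (?\<phi> x ^ Suc n / Suc n)) has_real_derivative
          - (Suc n * (- g x * ?\<phi> x ^ n) / Suc n)) (at x within {t..y})"
        by (intro DERIV_minus DERIV_cdivide)
      then show ?thesis by simp
    qed
    from fundamental_theorem_of_calculus[OF that this[unfolded has_real_derivative_iff_has_vector_derivative]]
    show ?thesis by (simp add: integral_unique diff_divide_distrib)
  qed
  then have "eventually (\<lambda>y. integral {t..y} (\<lambda>s. g s * ?\<phi> s ^ n) =
      (?\<phi> t ^ Suc n - ?\<phi> y ^ Suc n) / Suc n) at_top"
    by (rule eventually_at_top_linorderI)
  moreover have "(?\<phi> \<longlongrightarrow> 0) at_top"
    using absolutely_integrable_on_tail_if_nonneg[OF g_integrable g_nonneg order_refl]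
    by (rule tailint_tendsto_0)
  then have "((\<lambda>y. (?\<phi> t ^ Suc n - ?\<phi> y ^ Suc n) / Suc n)
      \<longlongrightarrow> (?\<phi> t ^ Suc n - 0 ^ Suc n) / Suc n) at_top"
    by (intro tendsto_divide tendsto_diff tendsto_power tendsto_const) simp_all
  ultimately show "((\<lambda>y. integral {t..y} (\<lambda>s. g s * ?\<phi> s ^ n))
      \<longlongrightarrow> ?\<phi> t ^ Suc n / Suc n) at_top"
    by (simp add: tendsto_cong)
  show "0 \<le> g s * ?\<phi> s ^ n" if "t \<le> s" for s
    using that assms g_nonneg tailint_g_nonneg by simp
qed

lemma integral_mult_sqrt_tailint_power_le:
  assumes "a \<le> t"
  shows "(\<lambda>s. g s * sqrt (tailint g s) ^ m) integrable_on {t..}"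
    and "real (Suc m) * integral {t..} (\<lambda>s. g s * sqrt (tailint g s) ^ m)
      \<le> 2 * sqrt (tailint g t) ^ (m + 2)"
proof -
  txt \<open>Writing \<open>m = 2n + e\<close> with \<open>e \<le> 1\<close> reduces to the integer powers \<open>\<phi>^n\<close> of the previous
    lemma, at the price of the constant \<open>2/(m+1)\<close> instead of the exact \<open>2/(m+2)\<close>.\<close>
  let ?\<phi> = "tailint g" and ?n = "m div 2" and ?e = "m mod 2"
  define c where "c = sqrt (?\<phi> t) ^ ?e"
  have c_nonneg: "0 \<le> c"
    unfolding c_def using tailint_g_nonneg[OF assms] by simp
  have sqrt_power: "sqrt (?\<phi> s) ^ m = sqrt (?\<phi> s) ^ ?e * ?\<phi> s ^ ?n" if "a \<le> s" for s
  proof -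
    have "sqrt (?\<phi> s) ^ m = sqrt (?\<phi> s) ^ ?e * sqrt (?\<phi> s) ^ (2 * ?n)"
      by (simp flip: power_add)
    also have "sqrt (?\<phi> s) ^ (2 * ?n) = ?\<phi> s ^ ?n"
      using tailint_g_nonneg[OF that] by (simp add: power_mult)
    finally show ?thesis .
  qed
  have bound: "g s * sqrt (?\<phi> s) ^ m \<le> c * (g s * ?\<phi> s ^ ?n)" if "t \<le> s" for s
  proof -
    have "sqrt (?\<phi> s) ^ ?e \<le> c"
      unfolding c_def using assms that tailint_g_antimono tailint_g_nonneg
      by (intro power_mono) auto
    moreover have "0 \<le> g s * ?\<phi> s ^ ?n"
      using assms that g_nonneg tailint_g_nonneg by simp
    ultimately have "sqrt (?\<phi> s) ^ ?e * (g s * ?\<phi> s ^ ?n) \<le> c * (g s * ?\<phi> s ^ ?n)"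
      by (rule mult_right_mono)
    then show ?thesis
      unfolding sqrt_power[OF order_trans[OF assms that]] by (simp add: mult.left_commute)
  qed
  have major: "((\<lambda>s. c * (g s * ?\<phi> s ^ ?n)) has_integral c * (?\<phi> t ^ Suc ?n / Suc ?n)) {t..}"
    by (intro has_integral_mult_right has_integral_mult_tailint_power assms)
  show integrable: "(\<lambda>s. g s * sqrt (?\<phi> s) ^ m) integrable_on {t..}"
  proof (rule integrable_on_atLeast_if_dominated)
    show "continuous_on {t..} (\<lambda>s. g s * sqrt (?\<phi> s) ^ m)"
      using assms by (intro continuous_intros continuous_on_subset[OF g_cont]
          continuous_on_subset[OF continuous_on_tailint_g]) auto
    show "(\<lambda>s. c * (g s * ?\<phi> s ^ ?n)) integrable_on {t..}"
      using major by blast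
    show "\<bar>g s * sqrt (?\<phi> s) ^ m\<bar> \<le> c * (g s * ?\<phi> s ^ ?n)" if "t \<le> s" for s
      using bound[OF that] g_nonneg tailint_g_nonneg assms that by simp
  qed
  have "integral {t..} (\<lambda>s. g s * sqrt (?\<phi> s) ^ m) \<le> c * (?\<phi> t ^ Suc ?n / Suc ?n)"
    using integrable major bound by (intro has_integral_le[OF integrable_integral]) auto
  then have "real (Suc m) * integral {t..} (\<lambda>s. g s * sqrt (?\<phi> s) ^ m)
      \<le> real (Suc m) * (c * (?\<phi> t ^ Suc ?n / Suc ?n))"
    by (rule mult_left_mono) simp
  also have "\<dots> = real (Suc m) / Suc ?n * (c * ?\<phi> t ^ Suc ?n)"
    by simp
  also have "\<dots> \<le> 2 * (c * ?\<phi> t ^ Suc ?n)"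
  proof (rule mult_right_mono)
    have "Suc m \<le> 2 * Suc ?n" by presburger
    then show "real (Suc m) / Suc ?n \<le> 2" by (simp add: field_simps)
  qed (use c_nonneg tailint_g_nonneg[OF assms] in simp)
  also have "c * ?\<phi> t ^ Suc ?n = sqrt (?\<phi> t) ^ m * ?\<phi> t"
    unfolding c_def sqrt_power[OF assms] by simp
  also have "\<dots> = sqrt (?\<phi> t) ^ (m + 2)"
    using tailint_g_nonneg[OF assms] by (simp add: power_add)
  finally show "real (Suc m) * integral {t..} (\<lambda>s. g s * sqrt (?\<phi> s) ^ m)
      \<le> 2 * sqrt (?\<phi> t) ^ (m + 2)" .
qed

lemma integral_abs_mult_tailint_sq_le:
  fixes F :: "real \<Rightarrow> real"
  assumes F_cont: "continuous_on {a..} F"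
    and F_sq_integrable: "(\<lambda>x. F x ^ 2) integrable_on {a..}"
    and g_eq: "\<And>s. a \<le> s \<Longrightarrow> g s = tailint (\<lambda>x. F x ^ 2) s"
    and "a \<le> t"
  shows "(\<lambda>s. \<bar>F s\<bar> * g s) integrable_on {t..}"
    and "integral {t..} (\<lambda>s. \<bar>F s\<bar> * g s) \<le> g t * sqrt (tailint g t)"
proof -
  have F_sq_tail: "(\<lambda>x. F x ^ 2) integrable_on {t..}"
    by (rule integrable_on_tail_if_nonneg[OF F_sq_integrable _ \<open>a \<le> t\<close>]) simp
  have g_antimono: "g s \<le> g t" if "t \<le> s" for s
    using tailint_antimono[OF F_sq_tail] g_eq \<open>a \<le> t\<close> that by simp
  txt \<open>Cauchy--Schwarz in the form \<open>|F| g(s) \<le> l/2 F\<^sup>2 + g(t) g(s) / (2 l)\<close>, optimised over \<open>l\<close>.\<close>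
  define H where "H l s = l / 2 * F s ^ 2 + g t / (2 * l) * g s" for l s
  have H_integral: "(H l has_integral l / 2 * g t + g t / (2 * l) * tailint g t) {t..}" for l
    unfolding H_def tailint_def g_eq[OF \<open>a \<le> t\<close>]
    using F_sq_tail g_integrable_on_tail[OF \<open>a \<le> t\<close>]
    by (intro has_integral_add has_integral_mult_right integrable_integral)
  have H_bound: "\<bar>F s\<bar> * g s \<le> H l s" if "0 < l" "t \<le> s" for l s
  proof -
    have "2 * l * (\<bar>F s\<bar> * g s) \<le> l\<^sup>2 * F s ^ 2 + g s * g s"
      using sum_squares_bound[of "l * \<bar>F s\<bar>" "g s"]
      by (simp add: power_mult_distrib power2_eq_square algebra_simps)
    also have "\<dots> \<le> l\<^sup>2 * F s ^ 2 + g t * g s"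
      using g_antimono[OF that(2)] g_nonneg[of s] \<open>a \<le> t\<close> that
      by (intro add_left_mono mult_right_mono) auto
    finally show ?thesis
      using that(1) unfolding H_def by (simp add: field_simps power2_eq_square)
  qed
  show integrable: "(\<lambda>s. \<bar>F s\<bar> * g s) integrable_on {t..}"
  proof (rule integrable_on_atLeast_if_dominated)
    show "continuous_on {t..} (\<lambda>s. \<bar>F s\<bar> * g s)"
      using \<open>a \<le> t\<close> by (intro continuous_intros continuous_on_subset[OF F_cont]
          continuous_on_subset[OF g_cont]) auto
    show "H 1 integrable_on {t..}"
      using H_integral by blast
    show "\<bar>\<bar>F s\<bar> * g s\<bar> \<le> H 1 s" if "t \<le> s" for s
      using H_bound[OF zero_less_one that] g_nonneg[of s] \<open>a \<le> t\<close> that by simp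
  qed
  show "integral {t..} (\<lambda>s. \<bar>F s\<bar> * g s) \<le> g t * sqrt (tailint g t)"
  proof (rule le_mult_sqrt_if_le_AM_GM[OF g_nonneg[OF \<open>a \<le> t\<close>] tailint_g_nonneg[OF \<open>a \<le> t\<close>]])
    fix l :: real assume "0 < l"
    have "integral {t..} (\<lambda>s. \<bar>F s\<bar> * g s) \<le> l / 2 * g t + g t / (2 * l) * tailint g t"
      using integrable H_integral H_bound \<open>0 < l\<close>
      by (intro has_integral_le[OF integrable_integral]) auto
    then show "integral {t..} (\<lambda>s. \<bar>F s\<bar> * g s) \<le> g t * (l + tailint g t / l) / 2"
      by (simp add: field_simps)
  qed
qed

end

declare Qk.simps(3)[simp del]

locale M3_integrability =
  fixes M :: "real \<Rightarrow> real"
  assumes M_cont: "continuous_on {0..} M"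
    and M_integrable: "\<And>t. 0 \<le> t \<Longrightarrow> M integrable_on {t..}"
    and tail_sq_integrable: "\<And>t. 0 \<le> t \<Longrightarrow> (\<lambda>s. (tailint M s)\<^sup>2) integrable_on {t..}"
    and tailint_tail_sq_integrable: "tailint (\<lambda>s. (tailint M s)\<^sup>2) integrable_on {0..}"
begin

definition psi :: "real \<Rightarrow> real" where
  "psi = tailint (\<lambda>s. (tailint M s)\<^sup>2)"

lemma continuous_on_tailint_M: "continuous_on {0..} (tailint M)"
  using M_cont M_integrable by (rule continuous_on_tailint)

lemma psi_cont: "continuous_on {0..} psi"
  unfolding psi_def using tail_sq_integrable
  by (intro continuous_on_tailint continuous_intros continuous_on_tailint_M)

lemma psi_nonneg: "0 \<le> t \<Longrightarrow> 0 \<le> psi t"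
  unfolding psi_def using tail_sq_integrable by (intro tailint_nonneg) auto

lemma psi_antimono: "0 \<le> t \<Longrightarrow> t \<le> s \<Longrightarrow> psi s \<le> psi t"
  unfolding psi_def using tail_sq_integrable by (intro tailint_antimono) auto

lemma psi_integrable: "psi integrable_on {0..}"
  unfolding psi_def by (rule tailint_tail_sq_integrable)

lemma psi_integrable_on_tail: "0 \<le> t \<Longrightarrow> psi integrable_on {t..}"
  by (rule integrable_on_tail_if_nonneg[OF psi_integrable psi_nonneg])

lemma tailint_psi_nonneg: "0 \<le> t \<Longrightarrow> 0 \<le> tailint psi t"
  using psi_nonneg by (intro tailint_nonneg psi_integrable_on_tail) auto

lemma tailint_psi_antimono: "0 \<le> t \<Longrightarrow> t \<le> s \<Longrightarrow> tailint psi s \<le> tailint psi t"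
  using psi_nonneg by (intro tailint_antimono psi_integrable_on_tail) auto

lemma qk_1: "qk M 1 = M"
  by (simp add: qk_def fun_eq_iff)

lemma qk_2: "qk M 2 = (\<lambda>s. (tailint M s)\<^sup>2)"
  by (simp add: qk_def fun_eq_iff power2_eq_square)

lemma Qk_2: "Qk M 2 t = - psi t"
  using Qk_qk[of 2 M t] by (simp add: qk_2 psi_def)

lemma phi_eq: "phi M t = tailint psi t"
proof -
  have "Qk M 2 = (\<lambda>t. - psi t)"
    by (simp add: fun_eq_iff Qk_2)
  then show ?thesis
    by (simp add: phi_def tailint_def)
qed

abbreviation Qk_bound :: "nat \<Rightarrow> real \<Rightarrow> real" where
  "Qk_bound k t \<equiv> 4 ^ (k - 1) * psi t * sqrt (tailint psi t) ^ (k - 2)"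

lemma continuous_on_qk:
  assumes "1 \<le> k" and Qk_cont: "\<And>j. 1 \<le> j \<Longrightarrow> j < k \<Longrightarrow> continuous_on {0..} (Qk M j)"
  shows "continuous_on {0..} (qk M k)"
proof (cases "k = 1")
  case True
  then show ?thesis
    using M_cont by (simp only: qk_1)
next
  case False
  with assms(1) have "qk M k = (\<lambda>s. \<Sum>j=1..k-1. Qk M j s * Qk M (k - j) s)"
    by (simp add: qk_def fun_eq_iff)
  then show ?thesis
    by (simp only:) (intro continuous_on_sum continuous_on_mult Qk_cont; auto)
qed

lemma continuous_on_Qk:
  assumes "1 \<le> k" "continuous_on {0..} (qk M k)" "\<And>t. 0 \<le> t \<Longrightarrow> qk M k integrable_on {t..}"
  shows "continuous_on {0..} (Qk M k)"
proof -
  have "continuous_on {0..} (\<lambda>t. - tailint (qk M k) t)"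
    using assms by (intro continuous_intros continuous_on_tailint)
  then show ?thesis
    using Qk_qk[OF assms(1)] by simp
qed

text \<open>Here \<open>k = n + 3\<close>. For \<open>n = 0\<close> there are no inner terms, and the truncated exponent
  \<open>n - 1\<close> is harmless because it is multiplied by \<open>real n = 0\<close>.\<close>

lemma abs_qk_le:
  assumes bound: "\<And>j s. 2 \<le> j \<Longrightarrow> j < n + 3 \<Longrightarrow> 0 \<le> s \<Longrightarrow> \<bar>Qk M j s\<bar> \<le> Qk_bound j s"
    and "0 \<le> t" "t \<le> s"
  shows "\<bar>qk M (n + 3) s\<bar> \<le> 2 * 4 ^ (n + 1) * sqrt (tailint psi t) ^ n * (\<bar>tailint M s\<bar> * psi s)
      + real n * 4 ^ (n + 1) * psi t * (psi s * sqrt (tailint psi s) ^ (n - 1))"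
proof -
  let ?P = "\<lambda>s. sqrt (tailint psi s)"
  define a where "a j = \<bar>Qk M j s * Qk M (n + 3 - j) s\<bar>" for j
  have "0 \<le> s" using assms by simp
  have psi_s: "0 \<le> psi s" "psi s \<le> psi t"
    using assms by (auto intro: psi_nonneg psi_antimono)
  have P_s: "0 \<le> ?P s" "?P s \<le> ?P t"
    using assms by (auto intro: tailint_psi_nonneg tailint_psi_antimono)
  have outer: "\<bar>tailint M s\<bar> * \<bar>Qk M (n + 2) s\<bar>
      \<le> 4 ^ (n + 1) * ?P t ^ n * (\<bar>tailint M s\<bar> * psi s)"
  proof -
    have "\<bar>Qk M (n + 2) s\<bar> \<le> 4 ^ (n + 1) * psi s * ?P s ^ n"
      using bound[of "n + 2" s] \<open>0 \<le> s\<close> by simp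
    also have "\<dots> \<le> 4 ^ (n + 1) * psi s * ?P t ^ n"
      using psi_s P_s by (intro mult_left_mono power_mono) auto
    finally have "\<bar>tailint M s\<bar> * \<bar>Qk M (n + 2) s\<bar>
        \<le> \<bar>tailint M s\<bar> * (4 ^ (n + 1) * psi s * ?P t ^ n)"
      by (rule mult_left_mono) simp
    then show ?thesis
      by (simp add: mult_ac)
  qed
  define X where "X = 4 ^ (n + 1) * ?P t ^ n * (\<bar>tailint M s\<bar> * psi s)"
  define C where "C = 4 ^ (n + 1) * psi t * (psi s * ?P s ^ (n - 1))"
  have a_first: "a 1 \<le> X"
    using outer by (simp add: a_def X_def abs_mult)
  have a_last: "a (n + 2) \<le> X"
    using outer by (simp add: a_def X_def abs_mult mult.commute)
  have a_middle: "a j \<le> C" if "j \<in> {2..n + 1}" for j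
  proof -
    let ?i = "n + 3 - j"
    have "\<bar>Qk M j s\<bar> \<le> Qk_bound j s"
      by (rule bound) (use that \<open>0 \<le> s\<close> in auto)
    moreover have "\<bar>Qk M ?i s\<bar> \<le> Qk_bound ?i s"
      by (rule bound) (use that \<open>0 \<le> s\<close> in auto)
    ultimately have "a j \<le> Qk_bound j s * Qk_bound ?i s"
      unfolding a_def abs_mult by (rule mult_mono) (use psi_s P_s in simp_all)
    also have "\<dots> = (4 ^ (j - 1) * 4 ^ (?i - 1)) * psi s
        * (psi s * (?P s ^ (j - 2) * ?P s ^ (?i - 2)))"
      by (simp only: mult_ac)
    also have "\<dots> = 4 ^ (n + 1) * psi s * (psi s * ?P s ^ (n - 1))"
    proof -
      have "(j - 1) + (?i - 1) = n + 1" "(j - 2) + (?i - 2) = n - 1"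
        using that by auto
      then show ?thesis
        by (simp only: power_add[symmetric])
    qed
    also have "\<dots> \<le> C"
      unfolding C_def using psi_s P_s by (intro mult_left_mono mult_right_mono) auto
    finally show ?thesis .
  qed
  have "\<bar>qk M (n + 3) s\<bar> \<le> sum a {1..n + 2}"
    unfolding a_def qk_def by (simp add: sum_abs del: sum.cl_ivl_Suc)
  also have "\<dots> = a 1 + sum a {2..n + 1} + a (n + 2)"
    by (simp add: sum.atLeast_Suc_atMost numeral_eq_Suc)
  also have "\<dots> \<le> X + real n * C + X"
  proof -
    have "sum a {2..n + 1} \<le> (\<Sum>j=2..n + 1. C)"
      by (rule sum_mono) (rule a_middle)
    then show ?thesis
      using a_first a_last by simp
  qed
  finally show ?thesis
    unfolding X_def C_def by (simp add: algebra_simps)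
qed

lemma Qk_bound_step:
  assumes bound: "\<And>j s. 2 \<le> j \<Longrightarrow> j < n + 3 \<Longrightarrow> 0 \<le> s \<Longrightarrow> \<bar>Qk M j s\<bar> \<le> Qk_bound j s"
    and qk_cont: "continuous_on {0..} (qk M (n + 3))" and "0 \<le> t"
  shows "qk M (n + 3) integrable_on {t..}"
    and "\<bar>Qk M (n + 3) t\<bar> \<le> Qk_bound (n + 3) t"
proof -
  let ?P = "\<lambda>s. sqrt (tailint psi s)"
  let ?f1 = "\<lambda>s. \<bar>tailint M s\<bar> * psi s" and ?f2 = "\<lambda>s. psi s * ?P s ^ (n - 1)"
  define c1 where "c1 = 2 * 4 ^ (n + 1) * ?P t ^ n"
  define c2 where "c2 = real n * 4 ^ (n + 1) * psi t"
  define D where "D s = c1 * ?f1 s + c2 * ?f2 s" for s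
  have psi_eq: "psi s = tailint (\<lambda>x. (tailint M x)\<^sup>2) s" for s
    by (simp add: psi_def)
  note f1 = integral_abs_mult_tailint_sq_le[OF psi_cont psi_nonneg psi_integrable
      continuous_on_tailint_M tail_sq_integrable[OF order_refl] psi_eq \<open>0 \<le> t\<close>]
  note f2 = integral_mult_sqrt_tailint_power_le[OF psi_cont psi_nonneg psi_integrable \<open>0 \<le> t\<close>,
      of "n - 1"]
  have D_integral: "(D has_integral c1 * integral {t..} ?f1 + c2 * integral {t..} ?f2) {t..}"
    unfolding D_def using f1(1) f2(1)
    by (intro has_integral_add has_integral_mult_right integrable_integral)
  have D_bound: "\<bar>qk M (n + 3) s\<bar> \<le> D s" if "t \<le> s" for s
    unfolding D_def c1_def c2_def using abs_qk_le[OF bound \<open>0 \<le> t\<close> that] by simp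
  show integrable: "qk M (n + 3) integrable_on {t..}"
  proof (rule integrable_on_atLeast_if_dominated)
    show "continuous_on {t..} (qk M (n + 3))"
      using qk_cont by (rule continuous_on_subset) (use \<open>0 \<le> t\<close> in auto)
  qed (use D_integral D_bound in auto)
  have c2_bound: "c2 * integral {t..} ?f2 \<le> 2 * 4 ^ (n + 1) * psi t * ?P t ^ (n + 1)"
  proof (cases "n = 0")
    case True
    then show ?thesis
      unfolding c2_def using psi_nonneg[OF \<open>0 \<le> t\<close>] tailint_psi_nonneg[OF \<open>0 \<le> t\<close>] by simp
  next
    case False
    then have "real n * integral {t..} ?f2 \<le> 2 * ?P t ^ (n + 1)"
      using f2(2) by (simp add: Suc_diff_le numeral_2_eq_2)
    then have "4 ^ (n + 1) * psi t * (real n * integral {t..} ?f2)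
        \<le> 4 ^ (n + 1) * psi t * (2 * ?P t ^ (n + 1))"
      using psi_nonneg[OF \<open>0 \<le> t\<close>] by (intro mult_left_mono) simp_all
    then show ?thesis
      unfolding c2_def by (simp add: mult_ac)
  qed
  have "\<bar>Qk M (n + 3) t\<bar> = \<bar>integral {t..} (qk M (n + 3))\<bar>"
    using Qk_qk[of "n + 3" M t] by (simp add: tailint_def)
  also have "\<dots> \<le> integral {t..} D"
  proof -
    have "norm (integral {t..} (qk M (n + 3))) \<le> integral {t..} D"
      by (rule integral_norm_bound_integral[OF integrable]) (use D_integral D_bound in auto)
    then show ?thesis by simp
  qed
  also have "\<dots> = c1 * integral {t..} ?f1 + c2 * integral {t..} ?f2"
    using D_integral by (rule integral_unique)
  also have "\<dots> \<le> c1 * (psi t * ?P t) + 2 * 4 ^ (n + 1) * psi t * ?P t ^ (n + 1)"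
    using f1(2) c2_bound unfolding c1_def
    by (intro add_mono mult_left_mono) (simp_all add: tailint_psi_nonneg \<open>0 \<le> t\<close>)
  also have "\<dots> = Qk_bound (n + 3) t"
    unfolding c1_def by (simp add: algebra_simps)
  finally show "\<bar>Qk M (n + 3) t\<bar> \<le> Qk_bound (n + 3) t" .
qed

lemma Qk_regularity_and_bound:
  assumes "1 \<le> k"
  shows "continuous_on {0..} (Qk M k) \<and> (\<forall>t\<ge>0. qk M k integrable_on {t..}) \<and>
    (2 \<le> k \<longrightarrow> (\<forall>t\<ge>0. \<bar>Qk M k t\<bar> \<le> Qk_bound k t))"
  using assms
proof (induction k rule: less_induct)
  case (less k)
  have qk_cont: "continuous_on {0..} (qk M k)"
    using less.prems by (rule continuous_on_qk) (use less.IH in blast)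
  have bound: "\<bar>Qk M j s\<bar> \<le> Qk_bound j s" if "2 \<le> j" "j < k" "0 \<le> s" for j s
    using less.IH that by auto
  consider "k = 1" | "k = 2" | n where "k = n + 3"
  proof -
    have "k = 1 \<or> k = 2 \<or> k = (k - 3) + 3"
      using less.prems by arith
    then show thesis
      using that by blast
  qed
  then have "(\<forall>t\<ge>0. qk M k integrable_on {t..}) \<and>
      (2 \<le> k \<longrightarrow> (\<forall>t\<ge>0. \<bar>Qk M k t\<bar> \<le> Qk_bound k t))"
  proof cases
    case 1
    then have "qk M k = M" by (simp add: qk_def fun_eq_iff)
    with 1 show ?thesis by (simp add: M_integrable)
  next
    case 2
    then show ?thesis by (simp add: qk_2 tail_sq_integrable Qk_2 psi_nonneg)
  next
    case (3 n)
    note step = Qk_bound_step[OF bound[unfolded 3] qk_cont[unfolded 3]]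
    show ?thesis
      unfolding 3 using step by simp
  qed
  with continuous_on_Qk[OF less.prems qk_cont] show ?case by blast
qed

end

text \<open>Only the integrability part of (M3) is needed.\<close>

lemma M3_integrability_if_M3:
  assumes "continuous_on {0..} M" and "M3 M \<gamma>"
  shows "M3_integrability M"
  using assms unfolding M3_def by unfold_locales auto

theorem lemma2:
  fixes M :: "real \<Rightarrow> real" and \<gamma> T :: real
  assumes "continuous_on {0..} M"
    and "\<gamma> > 0" and "M3 M \<gamma>"
    and "T \<ge> 0"
  shows "(\<forall>k\<ge>1. \<forall>t\<ge>T. qk M k integrable_on {t..})
    \<and> (\<forall>t\<ge>T. Qk M 2 t \<le> 0)
    \<and> (\<forall>k::nat\<ge>2. \<forall>t\<ge>T.
         \<bar>Qk M k t\<bar> \<le> 4 ^ (k - 1) * (- Qk M 2 t) * sqrt (phi M t) ^ (k - 2))"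
proof -
  interpret M3_integrability M
    using assms(1,3) by (rule M3_integrability_if_M3)
  show ?thesis
  proof (intro conjI allI impI)
    fix k :: nat and t assume "1 \<le> k" "T \<le> t"
    then show "qk M k integrable_on {t..}"
      using Qk_regularity_and_bound[of k] \<open>T \<ge> 0\<close> by auto
  next
    fix t assume "T \<le> t"
    then show "Qk M 2 t \<le> 0"
      using psi_nonneg[of t] \<open>T \<ge> 0\<close> by (simp add: Qk_2)
  next
    fix k :: nat and t assume "2 \<le> k" "T \<le> t"
    then have "\<bar>Qk M k t\<bar> \<le> Qk_bound k t"
      using Qk_regularity_and_bound[of k] \<open>T \<ge> 0\<close> by auto
    then show "\<bar>Qk M k t\<bar> \<le> 4 ^ (k - 1) * (- Qk M 2 t) * sqrt (phi M t) ^ (k - 2)"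
      by (simp add: Qk_2 phi_eq)
  qed
qed

end
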